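(* Let $(\varGamma,C)$ be a split-step SUSYQW with coin $C(x)=C(\mathrm R)$ for $x\ge1$ and $C(x)=C(\mathrm L)$ for $x\le0$, where $C(\mathrm L),C(\mathrm R)$ are nontrivial and $b(\mathrm L)\ne0\ne b(\mathrm R)$ (Type III). Let $\Phi_\pm:\mathbb Z\to\mathbb C^2$ satisfy $\Phi_\pm(x+1)=A_\pm(x)\Phi_\pm(x)$ for all $x\in\mathbb Z$, and put $(k_{\pm,1},k_{\pm,2})^{\mathrm T}:=P_\pm(\mathrm L)^{-1}\Phi_\pm(0)$. Then $\sum_{x\in\mathbb Z}\|\Phi_\pm(x)\|^2<\infty$ if and only if for each $j=1,2$, \[ |k_{\pm,j}|^2\sum_{x\in\mathbb N}\Big(|z_{\pm,j}(\mathrm L)|^{-2x}+|z_{\pm,j}(\mathrm R)|^{2x}\Big)<\infty. \] Moreover: $|z_{+,1}(\mathrm L)|^{-1}<1$ and $|z_{+,1}(\mathrm R)|<1$ iff $a(\mathrm L)<-p<a(\mathrm R)$; $|z_{+,2}(\mathrm L)|^{-1}<1$ and $|z_{+,2}(\mathrm R)|<1$ iff $a(\mathrm R)<p<a(\mathrm L)$; $|z_{-,1}(\mathrm L)|^{-1}<1$ and $|z_{-,1}(\mathrm R)|<1$ iff $a(\mathrm R)<-p<a(\mathrm L)$; $|z_{-,2}(\mathrm L)|^{-1}<1$ and $|z_{-,2}(\mathrm R)|<1$ iff $a(\mathrm L)<p<a(\mathrm R)$. Finally, $\dim\ker Q_{\epsilon_\pm}\le1$.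
   Context: Let $L$ be the left shift $(L\Psi)(x)=\Psi(x+1)$ on $\ell^2(\mathbb Z)$. A split-step SUSYQW is $\varGamma=\begin{pmatrix} p & qL\\ \overline{q}L^* & -p\end{pmatrix}$, $C=\begin{pmatrix} a_1 & \overline{b}\\ b & a_2\end{pmatrix}$ on $\ell^2(\mathbb Z)\oplus\ell^2(\mathbb Z)$ with $p\in\mathbb R$, $q\in\mathbb C\setminus\{0\}$, $p^2+|q|^2=1$, $\theta=\operatorname{Arg}q$, real sequences $a_1,a_2$ and complex sequence $b$ with $a_j(x)^2+|b(x)|^2=1$, $b(x)(a_1(x)+a_2(x))=0$. $C(x)=\begin{pmatrix} a_1(x)&\overline{b(x)}\\ b(x)&a_2(x)\end{pmatrix}$; a nontrivial (i.e. $\ne\pm I$) limit $C(\sharp)$ has $a_1(\sharp)=-a_2(\sharp)=:a(\sharp)$, $a(\sharp)^2+|b(\sharp)|^2=1$. Define $\alpha_\pm(x)=(1\pm p)e^{i\theta}b(x)$, $\beta(x)=|q|(a_2(x+1)-a_1(x))$, and $A_\pm(x)=\begin{pmatrix}\mp\beta(x)/\alpha_\pm(x+1)&\overline{\alpha_\mp(x)}/\alpha_\pm(x+1)\\1&0\end{pmatrix}$. For $\sharp\in\{\mathrm L,\mathrm R\}$: $z_{\pm,j}(\sharp)=\frac{\overline q}{1\pm p}\cdot\frac{(-1)^j\pm a(\sharp)}{b(\sharp)}$ ($j=1,2$) and $P_\pm(\sharp)=\begin{pmatrix}z_{\pm,1}(\sharp)&z_{\pm,2}(\sharp)\\1&1\end{pmatrix}$.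 $Q_{\epsilon_\pm}$ are the operators on $\ell^2(\mathbb Z)$ given by $-2iQ_{\epsilon_\pm}=(1\pm p)e^{i\theta}Lb-(1\mp p)e^{-i\theta}\overline{b}L^*\pm|q|(a_2(\cdot+1)-a_1)$. $\mathbb N=\{1,2,\dots\}$; an open interval $(s,t)$ with $s\ge t$ is empty. *)

theory Defs
  imports "HOL-Analysis.Analysis" "HOL-Library.Function_Algebras"
begin

text \<open>Signs: the sign parameter s :: real is +1 for the subscript + and -1 for the subscript -.\<close>

definition mat2 :: "'a \<Rightarrow> 'a \<Rightarrow> 'a \<Rightarrow> 'a \<Rightarrow> 'a^2^2" where
  "mat2 a11 a12 a21 a22 = (\<chi> i j. if i = 1 then (if j = 1 then a11 else a12)
                                      else (if j = 1 then a21 else a22))"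

definition alpha :: "real \<Rightarrow> real \<Rightarrow> complex \<Rightarrow> (int \<Rightarrow> complex) \<Rightarrow> int \<Rightarrow> complex" where
  "alpha s p q b x = complex_of_real (1 + s * p) * exp (\<i> * complex_of_real (Arg q)) * b x"

definition beta :: "complex \<Rightarrow> (int \<Rightarrow> real) \<Rightarrow> (int \<Rightarrow> real) \<Rightarrow> int \<Rightarrow> real" where
  "beta q a1 a2 x = cmod q * (a2 (x + 1) - a1 x)"

definition Amat :: "real \<Rightarrow> real \<Rightarrow> complex \<Rightarrow> (int \<Rightarrow> real) \<Rightarrow> (int \<Rightarrow> real)
                     \<Rightarrow> (int \<Rightarrow> complex) \<Rightarrow> int \<Rightarrow> complex^2^2" where
  "Amat s p q a1 a2 b x =
     mat2 (- complex_of_real (s * beta q a1 a2 x) / alpha s p q b (x + 1))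
          (cnj (alpha (- s) p q b x) / alpha s p q b (x + 1))
          1 0"

definition zval :: "real \<Rightarrow> nat \<Rightarrow> real \<Rightarrow> complex \<Rightarrow> real \<Rightarrow> complex \<Rightarrow> complex" where
  "zval s j p q a b = cnj q / complex_of_real (1 + s * p)
                        * complex_of_real ((-1) ^ j + s * a) / b"

definition Pmat :: "real \<Rightarrow> real \<Rightarrow> complex \<Rightarrow> real \<Rightarrow> complex \<Rightarrow> complex^2^2" where
  "Pmat s p q a b = mat2 (zval s 1 p q a b) (zval s 2 p q a b) 1 1"

definition Qop :: "real \<Rightarrow> real \<Rightarrow> complex \<Rightarrow> (int \<Rightarrow> real) \<Rightarrow> (int \<Rightarrow> real)
                    \<Rightarrow> (int \<Rightarrow> complex) \<Rightarrow> (int \<Rightarrow> complex) \<Rightarrow> int \<Rightarrow> complex" where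
  "Qop s p q a1 a2 b \<psi> x =
     (complex_of_real (1 + s * p) * exp (\<i> * complex_of_real (Arg q)) * b (x + 1) * \<psi> (x + 1)
      - complex_of_real (1 - s * p) * exp (- \<i> * complex_of_real (Arg q)) * cnj (b x) * \<psi> (x - 1)
      + complex_of_real (s * cmod q * (a2 (x + 1) - a1 x)) * \<psi> x) / (- 2 * \<i>)"

definition l2Z :: "(int \<Rightarrow> complex) set" where
  "l2Z = {\<psi>. (\<lambda>x. (cmod (\<psi> x))\<^sup>2) summable_on UNIV}"

definition kerQ :: "real \<Rightarrow> real \<Rightarrow> complex \<Rightarrow> (int \<Rightarrow> real) \<Rightarrow> (int \<Rightarrow> real)
                    \<Rightarrow> (int \<Rightarrow> complex) \<Rightarrow> (int \<Rightarrow> complex) set" where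
  "kerQ s p q a1 a2 b = {\<psi> \<in> l2Z. Qop s p q a1 a2 b \<psi> = 0}"

definition cscale :: "complex \<Rightarrow> (int \<Rightarrow> complex) \<Rightarrow> (int \<Rightarrow> complex)" where
  "cscale c f = (\<lambda>x. c * f x)"

text \<open>Complex dimension of V is at most 1: every C-linearly independent subset of V
  is finite with at most one element (valid for any dimension, finite or not).\<close>
definition cdim_le_1 :: "(int \<Rightarrow> complex) set \<Rightarrow> bool" where
  "cdim_le_1 V = (\<forall>B \<subseteq> V. \<not> module.dependent cscale B \<longrightarrow> finite B \<and> card B \<le> 1)"

end

theory Submission
  imports Defs
begin

text \<open>On each half-line the coin is constant, and there the transfer matrix \<open>A(x)\<close> has the
  eigenvectors \<open>(z\<^sub>j, 1)\<close> with eigenvalues \<open>z\<^sub>j\<close>; at the interface \<open>x = 0\<close> it carries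
  \<open>(z\<^sub>j(L), 1)\<close> to \<open>z\<^sub>j(L) (z\<^sub>j(R), 1)\<close>. Hence each solution of \<open>\<Phi>(x+1) = A(x) \<Phi>(x)\<close> is
  \<open>k\<^sub>1\<close> times a mode growing like \<open>z\<^sub>1(L)\<^sup>x\<close>, \<open>z\<^sub>1(R)\<^sup>x\<close> on the two half-lines, plus \<open>k\<^sub>2\<close> times the
  analogous mode for \<open>j = 2\<close>; since \<open>z\<^sub>1 \<noteq> z\<^sub>2\<close>, it is square summable iff every mode with nonzero
  coefficient decays on both sides. The explicit value of \<open>|z\<^sub>j|\<^sup>2\<close> turns decay into linear
  inequalities between \<open>a(L)\<close>, \<open>a(R)\<close> and \<open>\<plusminus>p\<close>, which cannot hold for \<open>j = 1\<close> and \<open>j = 2\<close>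
  simultaneously. Finally \<open>Q \<psi> = 0\<close> is the transfer recursion for \<open>(\<psi>(x), \<psi>(x - 1))\<close>, so the
  kernel of \<open>Q\<close> lies in the span of the single decaying mode.\<close>

definition zvec :: "complex \<Rightarrow> complex^2" where
  "zvec z = (\<chi> i. if i = 1 then z else 1)"

lemma zvec_nth [simp]: "zvec z $ 1 = z" "zvec z $ 2 = 1"
  by (simp_all add: zvec_def)

lemma vec2_eq_iff: "(v::'a^2) = w \<longleftrightarrow> v$1 = w$1 \<and> v$2 = w$2"
  by (auto simp: vec_eq_iff forall_2)

lemma norm_vec2_sq: "(norm (v::complex^2))\<^sup>2 = (cmod (v$1))\<^sup>2 + (cmod (v$2))\<^sup>2"
  by (simp add: norm_vec_def L2_set_def sum_2)

lemma mat2_mult_vec_nth [simp]: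
  "(mat2 a b c d *v v) $ 1 = a * v$1 + b * v$2"
  "(mat2 a b c d *v v) $ 2 = c * v$1 + d * v$2"
  by (simp_all add: mat2_def matrix_vector_mult_def sum_2)

lemma invertible_matrix_inv_right:
  "invertible A \<Longrightarrow> A ** matrix_inv A = mat 1"
  unfolding invertible_def matrix_inv_def by (rule someI_ex[THEN conjunct1])

lemma summable_add_nonneg_iff:
  fixes f g :: "nat \<Rightarrow> real"
  assumes "\<And>n. f n \<ge> 0" and "\<And>n. g n \<ge> 0"
  shows "summable (\<lambda>n. f n + g n) \<longleftrightarrow> summable f \<and> summable g"
proof
  assume sum: "summable (\<lambda>n. f n + g n)"
  show "summable f \<and> summable g"
    by (intro conjI summable_comparison_test'[OF sum, where N = 0]) (use assms in auto)
qed (intro summable_add; simp)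

lemma infsum_ennreal_less_top_iff:
  fixes f :: "'a \<Rightarrow> real"
  assumes nonneg: "\<And>x. f x \<ge> 0"
  shows "(\<Sum>\<^sub>\<infinity>x\<in>A. ennreal (f x)) < \<infinity> \<longleftrightarrow> f summable_on A"
proof
  assume "f summable_on A"
  then have "(\<Sum>\<^sub>\<infinity>x\<in>A. ennreal (f x)) = ennreal (infsum f A)"
    using nonneg by (intro infsum_comm_additive_general[where f = ennreal, unfolded comp_def])
      (auto simp: sum_ennreal)
  then show "(\<Sum>\<^sub>\<infinity>x\<in>A. ennreal (f x)) < \<infinity>" by simp
next
  assume finite_sum: "(\<Sum>\<^sub>\<infinity>x\<in>A. ennreal (f x)) < \<infinity>"
  show "f summable_on A"
  proof (rule nonneg_bdd_above_summable_on)
    show "bdd_above (sum f ` {F. F \<subseteq> A \<and> finite F})"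
    proof (rule bdd_aboveI2)
      fix F assume F: "F \<in> {F. F \<subseteq> A \<and> finite F}"
      have "ennreal (sum f F) = (\<Sum>x\<in>F. ennreal (f x))"
        using nonneg by (simp add: sum_ennreal)
      also have "\<dots> \<le> (\<Sum>\<^sub>\<infinity>x\<in>A. ennreal (f x))"
        by (subst nonneg_infsum_complete) (use F in \<open>auto intro: SUP_upper\<close>)
      finally show "sum f F \<le> enn2real (\<Sum>\<^sub>\<infinity>x\<in>A. ennreal (f x))"
        using finite_sum by (cases "\<Sum>\<^sub>\<infinity>x\<in>A. ennreal (f x)" rule: ennreal_cases) auto
    qed
  qed (use nonneg in simp)
qed

lemma infsum_ennreal_even_powers_less_top_iff:
  fixes r1 r2 :: real
  assumes "r1 \<ge> 0" and "r2 \<ge> 0"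
  shows "(\<Sum>\<^sub>\<infinity>n\<in>{1::nat..}. ennreal (r1 ^ (2 * n) + r2 ^ (2 * n))) < \<infinity> \<longleftrightarrow> r1 < 1 \<and> r2 < 1"
proof -
  have even_power: "r ^ (2 * n) = (r\<^sup>2) ^ n" for r :: real and n
    by (simp add: power_mult)
  have "(\<Sum>\<^sub>\<infinity>n\<in>{1::nat..}. ennreal (r1 ^ (2 * n) + r2 ^ (2 * n))) < \<infinity>
      \<longleftrightarrow> (\<lambda>n. (r1\<^sup>2) ^ n + (r2\<^sup>2) ^ n) summable_on {1..}"
    unfolding even_power by (rule infsum_ennreal_less_top_iff) simp
  also have "\<dots> \<longleftrightarrow> (\<lambda>n. (r1\<^sup>2) ^ n + (r2\<^sup>2) ^ n) summable_on UNIV"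
  proof -
    have "UNIV = insert (0::nat) {1..}" by auto
    then show ?thesis by (metis summable_on_insert_iff)
  qed
  also have "\<dots> \<longleftrightarrow> summable (\<lambda>n. (r1\<^sup>2) ^ n + (r2\<^sup>2) ^ n)"
    by (rule summable_on_UNIV_nonneg_real_iff) simp
  also have "\<dots> \<longleftrightarrow> summable (\<lambda>n. (r1\<^sup>2) ^ n) \<and> summable (\<lambda>n. (r2\<^sup>2) ^ n)"
    by (rule summable_add_nonneg_iff) simp_all
  also have "\<dots> \<longleftrightarrow> r1 < 1 \<and> r2 < 1"
    using assms by (simp add: abs_square_less_1)
  finally show ?thesis .
qed

lemma summable_on_int_iff_half_lines:
  fixes f :: "int \<Rightarrow> real"
  assumes nonneg: "\<And>x. f x \<ge> 0"
  shows "f summable_on UNIV \<longleftrightarrow> summable (\<lambda>n. f (- int n)) \<and> summable (\<lambda>n. f (int n + 1))"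
proof -
  have half_line: "f summable_on range h \<longleftrightarrow> summable (f \<circ> h)" if "inj h" for h :: "nat \<Rightarrow> int"
    using summable_on_reindex[OF that, of f] summable_on_UNIV_nonneg_real_iff[of "f \<circ> h"] nonneg
    by simp
  have inj: "inj (\<lambda>n::nat. - int n)" "inj (\<lambda>n::nat. int n + 1)"
    by (auto intro: injI)
  have "range (\<lambda>n::nat. - int n) = {..0}"
  proof (intro set_eqI iffI)
    show "x \<in> range (\<lambda>n::nat. - int n)" if "x \<in> {..0}" for x
      using that by (intro range_eqI[of _ _ "nat (- x)"]) simp
  qed auto
  moreover have "range (\<lambda>n::nat. int n + 1) = {1..}"
  proof (intro set_eqI iffI)
    show "x \<in> range (\<lambda>n::nat. int n + 1)" if "x \<in> {1..}" for x
      using that by (intro range_eqI[of _ _ "nat (x - 1)"]) simp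
  qed auto
  ultimately have "f summable_on {..0} \<longleftrightarrow> summable (\<lambda>n. f (- int n))"
    and "f summable_on {1..} \<longleftrightarrow> summable (\<lambda>n. f (int n + 1))"
    using half_line[OF inj(1)] half_line[OF inj(2)] by (simp_all add: comp_def)
  moreover have "f summable_on UNIV \<longleftrightarrow> f summable_on {..0} \<and> f summable_on {1..}"
  proof -
    have "UNIV = {..0::int} \<union> {1..}" "{..0::int} \<inter> {1..} = {}" by auto
    then show ?thesis
      by (metis summable_on_Un_disjoint summable_on_subset_banach subset_UNIV)
  qed
  ultimately show ?thesis by simp
qed

lemma square_summable_lincomb:
  fixes f g :: "nat \<Rightarrow> complex"
  assumes "summable (\<lambda>n. (cmod (f n))\<^sup>2)" and "summable (\<lambda>n. (cmod (g n))\<^sup>2)"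
  shows "summable (\<lambda>n. (cmod (c * f n + d * g n))\<^sup>2)"
proof (rule summable_comparison_test')
  show "summable (\<lambda>n. 2 * ((cmod c)\<^sup>2 * (cmod (f n))\<^sup>2 + (cmod d)\<^sup>2 * (cmod (g n))\<^sup>2))"
    using assms by (intro summable_mult summable_add)
  show "norm ((cmod (c * f n + d * g n))\<^sup>2)
          \<le> 2 * ((cmod c)\<^sup>2 * (cmod (f n))\<^sup>2 + (cmod d)\<^sup>2 * (cmod (g n))\<^sup>2)" for n
  proof -
    have "cmod (c * f n + d * g n) \<le> cmod c * cmod (f n) + cmod d * cmod (g n)"
      by (metis norm_mult norm_triangle_ineq)
    then have "(cmod (c * f n + d * g n))\<^sup>2 \<le> (cmod c * cmod (f n) + cmod d * cmod (g n))\<^sup>2"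
      by (simp add: power_mono)
    also have "\<dots> \<le> 2 * ((cmod c * cmod (f n))\<^sup>2 + (cmod d * cmod (g n))\<^sup>2)"
      using sum_squares_bound[of "cmod c * cmod (f n)" "cmod d * cmod (g n)"]
      by (simp add: power2_sum)
    finally show ?thesis by (simp add: power_mult_distrib)
  qed
qed

lemma square_summable_geometric:
  "summable (\<lambda>n. (cmod (k * w ^ n))\<^sup>2) \<longleftrightarrow> k = 0 \<or> cmod w < 1"
proof -
  have "(cmod (k * w ^ n))\<^sup>2 = (cmod k)\<^sup>2 * ((cmod w)\<^sup>2) ^ n" for n
    by (simp add: norm_mult norm_power power_mult_distrib mult.commute flip: power_mult)
  moreover have "(cmod w)\<^sup>2 < 1 \<longleftrightarrow> cmod w < 1"
    by (simp add: abs_square_less_1)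
  ultimately show ?thesis
    by (simp add: summable_cmult_iff summable_geometric_iff)
qed

lemma square_summable_two_modes:
  fixes u v :: "nat \<Rightarrow> complex"
  assumes "z1 \<noteq> z2"
  shows "summable (\<lambda>n. (norm (u n *s zvec z1 + v n *s zvec z2))\<^sup>2)
           \<longleftrightarrow> summable (\<lambda>n. (cmod (u n))\<^sup>2) \<and> summable (\<lambda>n. (cmod (v n))\<^sup>2)"
proof -
  from assms have "z1 - z2 \<noteq> 0" by simp
  define X where "X n = z1 * u n + z2 * v n" for n
  define Y where "Y n = 1 * u n + 1 * v n" for n
  have norm_eq: "(norm (u n *s zvec z1 + v n *s zvec z2))\<^sup>2 = (cmod (X n))\<^sup>2 + (cmod (Y n))\<^sup>2" for n
    unfolding norm_vec2_sq X_def Y_def by (simp add: mult.commute)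
  have "summable (\<lambda>n. (cmod (X n))\<^sup>2 + (cmod (Y n))\<^sup>2)
          \<longleftrightarrow> summable (\<lambda>n. (cmod (X n))\<^sup>2) \<and> summable (\<lambda>n. (cmod (Y n))\<^sup>2)"
    by (rule summable_add_nonneg_iff) simp_all
  moreover have "summable (\<lambda>n. (cmod (X n))\<^sup>2) \<and> summable (\<lambda>n. (cmod (Y n))\<^sup>2)
          \<longleftrightarrow> summable (\<lambda>n. (cmod (u n))\<^sup>2) \<and> summable (\<lambda>n. (cmod (v n))\<^sup>2)"
  proof
    assume "summable (\<lambda>n. (cmod (X n))\<^sup>2) \<and> summable (\<lambda>n. (cmod (Y n))\<^sup>2)"
    then have lincomb: "summable (\<lambda>n. (cmod (c * X n + d * Y n))\<^sup>2)" for c d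
      by (simp add: square_summable_lincomb)
    have "u n = 1 / (z1 - z2) * X n + - z2 / (z1 - z2) * Y n"
      and "v n = - 1 / (z1 - z2) * X n + z1 / (z1 - z2) * Y n" for n
      using \<open>z1 - z2 \<noteq> 0\<close> unfolding X_def Y_def
      by (simp_all add: divide_simps) (simp_all add: algebra_simps)
    then show "summable (\<lambda>n. (cmod (u n))\<^sup>2) \<and> summable (\<lambda>n. (cmod (v n))\<^sup>2)"
      using lincomb[of "1 / (z1 - z2)" "- z2 / (z1 - z2)"] lincomb[of "- 1 / (z1 - z2)" "z1 / (z1 - z2)"]
      by simp
  next
    assume "summable (\<lambda>n. (cmod (u n))\<^sup>2) \<and> summable (\<lambda>n. (cmod (v n))\<^sup>2)"
    then show "summable (\<lambda>n. (cmod (X n))\<^sup>2) \<and> summable (\<lambda>n. (cmod (Y n))\<^sup>2)"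
      using square_summable_lincomb[of u v z1 z2] square_summable_lincomb[of u v 1 1]
      unfolding X_def Y_def by simp
  qed
  ultimately show ?thesis unfolding norm_eq by simp
qed

lemma cdim_le_1_subset_line:
  assumes "V \<subseteq> range (\<lambda>c. cscale c F)"
  shows "cdim_le_1 V"
proof -
  interpret vector_space cscale
    by unfold_locales (simp_all add: cscale_def fun_eq_iff algebra_simps)
  have "B \<subseteq> span {F}" if "B \<subseteq> V" for B
    using that assms span_singleton by blast
  then show ?thesis
    unfolding cdim_le_1_def using independent_span_bound[of "{F}"] by fastforce
qed

lemma zval_1_neq_zval_2:
  assumes "q \<noteq> 0" and "1 + s * p \<noteq> 0" and "b \<noteq> 0"
  shows "zval s 1 p q a b \<noteq> zval s 2 p q a b"
proof -
  have "zval s 2 p q a b - zval s 1 p q a b = 2 * cnj q / (complex_of_real (1 + s * p) * b)"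
    using assms unfolding zval_def
    by (simp add: divide_simps del: of_real_add of_real_mult) (simp add: algebra_simps)
  also have "\<dots> \<noteq> 0"
    using assms by (simp del: of_real_add of_real_mult)
  finally show ?thesis by simp
qed

lemma cmod_zval_sq:
  fixes s p a :: real and q b :: complex and j :: nat
  assumes s: "s * s = 1" and hpq: "p\<^sup>2 + (cmod q)\<^sup>2 = 1" and hq: "q \<noteq> 0"
    and hab: "a\<^sup>2 + (cmod b)\<^sup>2 = 1" and hb: "b \<noteq> 0"
  defines "P \<equiv> s * p" and "A \<equiv> (-1) ^ j * s * a"
  shows "(cmod (zval s j p q a b))\<^sup>2 = (1 - P) * (1 + A) / ((1 + P) * (1 - A))"
    and "\<bar>P\<bar> < 1" and "\<bar>A\<bar> < 1"
proof -
  have c: "((-1::real) ^ j) * (-1) ^ j = 1"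
    by (simp flip: power_mult_distrib)
  have P2: "P\<^sup>2 = p\<^sup>2" and A2: "A\<^sup>2 = a\<^sup>2"
    unfolding P_def A_def using s c by (simp_all add: power2_eq_square algebra_simps)
  have "(cmod q)\<^sup>2 > 0" using hq by simp
  then have "p\<^sup>2 < 1" using hpq by linarith
  then show hP: "\<bar>P\<bar> < 1" using P2 by (simp flip: abs_square_less_1)
  have "(cmod b)\<^sup>2 > 0" using hb by simp
  then have "a\<^sup>2 < 1" using hab by linarith
  then show hA: "\<bar>A\<bar> < 1" using A2 by (simp flip: abs_square_less_1)
  have "(cmod (zval s j p q a b))\<^sup>2 = (cmod q)\<^sup>2 * ((-1) ^ j + s * a)\<^sup>2 / ((1 + P)\<^sup>2 * (cmod b)\<^sup>2)"
    unfolding zval_def P_def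
    by (simp add: norm_mult norm_divide power_mult_distrib power_divide
        del: of_real_add of_real_mult of_real_power)
  also have "(cmod q)\<^sup>2 = (1 + P) * (1 - P)" using hpq P2 by (simp add: algebra_simps power2_eq_square)
  also have "((-1) ^ j + s * a)\<^sup>2 = (1 + A) * (1 + A)"
    unfolding A_def using c by (simp add: power2_eq_square algebra_simps)
  also have "(cmod b)\<^sup>2 = (1 + A) * (1 - A)" using hab A2 by (simp add: algebra_simps power2_eq_square)
  finally show "(cmod (zval s j p q a b))\<^sup>2 = (1 - P) * (1 + A) / ((1 + P) * (1 - A))"
    using hP hA by (simp add: power2_eq_square)
qed

lemma zval_nonzero:
  assumes "s * s = 1" and "p\<^sup>2 + (cmod q)\<^sup>2 = 1" and "q \<noteq> 0"
    and "a\<^sup>2 + (cmod b)\<^sup>2 = 1" and "b \<noteq> 0"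
  shows "zval s j p q a b \<noteq> 0"
proof -
  define P where "P = s * p"
  define A where "A = (-1) ^ j * s * a"
  have "(cmod (zval s j p q a b))\<^sup>2 = (1 - P) * (1 + A) / ((1 + P) * (1 - A))"
    and "\<bar>P\<bar> < 1" "\<bar>A\<bar> < 1"
    using cmod_zval_sq[OF assms] unfolding P_def A_def by blast+
  then have "(cmod (zval s j p q a b))\<^sup>2 > 0" by simp
  then show ?thesis by auto
qed

lemma cmod_zval_less_one_iff:
  fixes s p a :: real and q b :: complex and j :: nat
  assumes "s * s = 1" and "p\<^sup>2 + (cmod q)\<^sup>2 = 1" and "q \<noteq> 0"
    and "a\<^sup>2 + (cmod b)\<^sup>2 = 1" and "b \<noteq> 0"
  shows "cmod (zval s j p q a b) < 1 \<longleftrightarrow> (-1) ^ j * s * a < s * p"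
    and "inverse (cmod (zval s j p q a b)) < 1 \<longleftrightarrow> s * p < (-1) ^ j * s * a"
proof -
  define P where "P = s * p"
  define A where "A = (-1) ^ j * s * a"
  have sq: "(cmod (zval s j p q a b))\<^sup>2 = (1 - P) * (1 + A) / ((1 + P) * (1 - A))"
    and "\<bar>P\<bar> < 1" "\<bar>A\<bar> < 1"
    using cmod_zval_sq[OF assms] unfolding P_def A_def by blast+
  then have den: "(1 + P) * (1 - A) > 0" by simp
  have "cmod (zval s j p q a b) < 1 \<longleftrightarrow> (cmod (zval s j p q a b))\<^sup>2 < 1"
    by (simp add: abs_square_less_1)
  also have "\<dots> \<longleftrightarrow> A < P"
    unfolding sq using den by (simp add: divide_less_eq algebra_simps)
  finally show "cmod (zval s j p q a b) < 1 \<longleftrightarrow> (-1) ^ j * s * a < s * p"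
    unfolding P_def A_def .
  have "inverse (cmod (zval s j p q a b)) < 1 \<longleftrightarrow> 1 < cmod (zval s j p q a b)"
    using zval_nonzero[OF assms] by (simp add: inverse_less_1_iff)
  also have "\<dots> \<longleftrightarrow> 1 < (cmod (zval s j p q a b))\<^sup>2"
    by (metis abs_norm_cancel abs_square_le_1 not_le)
  also have "\<dots> \<longleftrightarrow> P < A"
    unfolding sq using den by (simp add: less_divide_eq algebra_simps)
  finally show "inverse (cmod (zval s j p q a b)) < 1 \<longleftrightarrow> s * p < (-1) ^ j * s * a"
    unfolding P_def A_def .
qed


lemma Amat_mult_zvec:
  fixes s p aC aN :: real and q bC bN :: complex
  assumes s: "s * s = 1" and hpq: "p\<^sup>2 + (cmod q)\<^sup>2 = 1" and hp: "1 + s * p \<noteq> 0"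
    and hC: "aC\<^sup>2 + (cmod bC)\<^sup>2 = 1" and bC: "bC \<noteq> 0" and bN: "bN \<noteq> 0"
    and coin: "a1 x = aC" "b x = bC" "a2 (x + 1) = - aN" "b (x + 1) = bN"
  shows "Amat s p q a1 a2 b x *v zvec (zval s j p q aC bC)
           = zval s j p q aC bC *s zvec (zval s j p q aN bN)"
proof -
  define e where "e = exp (\<i> * of_real (Arg q))"
  define D where "D = complex_of_real (1 + s * p)"
  define D' where "D' = complex_of_real (1 - s * p)"
  define Q where "Q = complex_of_real (cmod q)"
  define c where "c = complex_of_real ((-1) ^ j)"
  define S where "S = complex_of_real s"
  have cnj_q: "cnj q = Q * cnj e"
    by (subst (1) rcis_cmod_Arg[symmetric]) (simp add: Q_def e_def rcis_def cis_conv_exp exp_cnj)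
  have z: "zval s j p q a b' = Q * cnj e * (c + S * a) / (D * b')" for a b'
    unfolding zval_def cnj_q c_def S_def D_def by simp
  have m11: "- complex_of_real (s * beta q a1 a2 x) / alpha s p q b (x + 1)
              = S * Q * (of_real aN + of_real aC) / (D * e * bN)"
    unfolding beta_def alpha_def coin S_def Q_def D_def e_def by (simp add: algebra_simps)
  have m12: "cnj (alpha (- s) p q b x) / alpha s p q b (x + 1)
              = D' * cnj e * cnj bC / (D * e * bN)"
    unfolding alpha_def coin D'_def D_def e_def by simp
  have "S * S = 1" "c * c = 1" unfolding S_def c_def using s
    by (simp_all flip: of_real_mult power_mult_distrib)
  moreover have "Q * Q = D * D'"
  proof -
    have "cmod q * cmod q = (1 + s * p) * (1 - s * p)"
      using hpq s by (simp add: algebra_simps power2_eq_square)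
    then show ?thesis unfolding Q_def D_def D'_def by (metis of_real_mult)
  qed
  moreover have "bC * cnj bC = 1 - aC * aC"
  proof -
    have "(cmod bC)\<^sup>2 = 1 - aC * aC" using hC by (simp add: power2_eq_square)
    then show ?thesis by (metis complex_norm_square)
  qed
  moreover have "cnj e * e = 1" unfolding e_def by (simp add: exp_cnj flip: exp_add)
  moreover have "D \<noteq> 0" unfolding D_def using hp by (simp del: of_real_add of_real_mult)
  moreover have "e \<noteq> 0" unfolding e_def by simp
  ultimately have "S * Q * (of_real aN + of_real aC) / (D * e * bN)
        * (Q * cnj e * (c + S * aC) / (D * bC)) + D' * cnj e * cnj bC / (D * e * bN)
      = Q * cnj e * (c + S * aC) / (D * bC) * (Q * cnj e * (c + S * aN) / (D * bN))"
    using bC bN by (simp add: field_simps) algebra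
  then show ?thesis
    unfolding vec2_eq_iff Amat_def mat2_mult_vec_nth m11 m12 by (simp add: z)
qed

locale type_III_walk =
  fixes p :: real and q :: complex and aL aR :: real and bL bR :: complex
    and a1 a2 :: "int \<Rightarrow> real" and b :: "int \<Rightarrow> complex" and s :: real
  assumes q_nonzero: "q \<noteq> 0" and p_q_unit: "p\<^sup>2 + (cmod q)\<^sup>2 = 1"
    and coin_L_unit: "aL\<^sup>2 + (cmod bL)\<^sup>2 = 1" and coin_R_unit: "aR\<^sup>2 + (cmod bR)\<^sup>2 = 1"
    and bL_nonzero: "bL \<noteq> 0" and bR_nonzero: "bR \<noteq> 0"
    and coin_R: "\<And>x. x \<ge> 1 \<Longrightarrow> a1 x = aR \<and> a2 x = - aR \<and> b x = bR"
    and coin_L: "\<And>x. x \<le> 0 \<Longrightarrow> a1 x = aL \<and> a2 x = - aL \<and> b x = bL"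
    and sign: "s = 1 \<or> s = -1"
begin

abbreviation "zL j \<equiv> zval s j p q aL bL"
abbreviation "zR j \<equiv> zval s j p q aR bR"
abbreviation "A x \<equiv> Amat s p q a1 a2 b x"

lemma sign_sq: "s * s = 1"
  using sign by auto

lemma one_plus_sign_p_pos: "1 + s * p > 0" "1 - s * p > 0"
proof -
  have "(cmod q)\<^sup>2 > 0" using q_nonzero by simp
  then have "p\<^sup>2 < 1" using p_q_unit by linarith
  then have "\<bar>p\<bar> < 1" by (simp add: abs_square_less_1)
  then show "1 + s * p > 0" "1 - s * p > 0" using sign by auto
qed

lemma b_nonzero: "b x \<noteq> 0"
  using coin_L[of x] coin_R[of x] bL_nonzero bR_nonzero by (cases "x \<le> 0") auto

lemma zL_nonzero: "zL j \<noteq> 0"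
  using zval_nonzero[OF sign_sq p_q_unit q_nonzero coin_L_unit bL_nonzero] .

lemma zL_distinct: "zL 1 \<noteq> zL 2" and zR_distinct: "zR 1 \<noteq> zR 2"
  using zval_1_neq_zval_2 one_plus_sign_p_pos q_nonzero bL_nonzero bR_nonzero by simp_all

lemma A_mult_zvec_left: "x \<le> -1 \<Longrightarrow> A x *v zvec (zL j) = zL j *s zvec (zL j)"
  using coin_L[of x] coin_L[of "x + 1"] one_plus_sign_p_pos
  by (intro Amat_mult_zvec[OF sign_sq p_q_unit _ coin_L_unit bL_nonzero bL_nonzero]) auto

lemma A_mult_zvec_interface: "A 0 *v zvec (zL j) = zL j *s zvec (zR j)"
  using coin_L[of 0] coin_R[of 1] one_plus_sign_p_pos
  by (intro Amat_mult_zvec[OF sign_sq p_q_unit _ coin_L_unit bL_nonzero bR_nonzero]) auto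

lemma A_mult_zvec_right: "x \<ge> 1 \<Longrightarrow> A x *v zvec (zR j) = zR j *s zvec (zR j)"
  using coin_R[of x] coin_R[of "x + 1"] one_plus_sign_p_pos
  by (intro Amat_mult_zvec[OF sign_sq p_q_unit _ coin_R_unit bR_nonzero bR_nonzero]) auto

lemma A_mult_cancel:
  assumes "A x *v u = A x *v v"
  shows "u = v"
proof -
  have "alpha s p q b (x + 1) \<noteq> 0" "alpha (- s) p q b x \<noteq> 0"
    unfolding alpha_def using one_plus_sign_p_pos b_nonzero
    by (auto simp del: of_real_add of_real_mult)
  then show ?thesis
    using assms unfolding vec2_eq_iff Amat_def by (auto simp: field_simps)
qed

definition mode :: "nat \<Rightarrow> int \<Rightarrow> complex^2" where
  "mode j x = (if x \<le> 0 then inverse (zL j) ^ nat (- x) *s zvec (zL j)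
               else (zL j * zR j ^ nat (x - 1)) *s zvec (zR j))"

lemma mode_step: "A x *v mode j x = mode j (x + 1)"
proof (cases "x \<le> -1")
  case True
  then have "nat (- x) = Suc (nat (- (x + 1)))" by simp
  then show ?thesis
    using True A_mult_zvec_left[OF True] zL_nonzero[of j]
    by (simp add: mode_def vector_scalar_commute field_simps)
next
  case False
  then consider "x = 0" | "x \<ge> 1" by linarith
  then show ?thesis
  proof cases
    case 1
    then show ?thesis by (simp add: mode_def A_mult_zvec_interface)
  next
    case 2
    then have "nat x = Suc (nat (x - 1))" by simp
    then show ?thesis
      using 2 A_mult_zvec_right[OF 2]
      by (simp add: mode_def vector_scalar_commute mult.commute mult.left_commute)
  qed
qed

lemma transfer_solution_unique:
  assumes "\<And>x. \<Phi> (x + 1) = A x *v \<Phi> x" and "\<And>x. \<Psi> (x + 1) = A x *v \<Psi> x"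
    and "\<Phi> 0 = \<Psi> 0"
  shows "\<Phi> x = \<Psi> x"
proof (induction x rule: int_induct[where k = 0])
  case (step1 i)
  then show ?case using assms(1,2)[of i] by simp
next
  case (step2 i)
  then show ?case using assms(1,2)[of "i - 1"] by (auto intro: A_mult_cancel)
qed (fact assms(3))

definition mode_coeff :: "(int \<Rightarrow> complex^2) \<Rightarrow> complex^2" where
  "mode_coeff \<Phi> = matrix_inv (Pmat s p q aL bL) *v \<Phi> 0"

lemma transfer_solution_eq_modes:
  assumes rec: "\<And>x. \<Phi> (x + 1) = A x *v \<Phi> x"
  shows "\<Phi> x = mode_coeff \<Phi> $ 1 *s mode 1 x + mode_coeff \<Phi> $ 2 *s mode 2 x"
proof (rule transfer_solution_unique[OF rec])
  show "(mode_coeff \<Phi> $ 1 *s mode 1 (x + 1) + mode_coeff \<Phi> $ 2 *s mode 2 (x + 1))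
      = A x *v (mode_coeff \<Phi> $ 1 *s mode 1 x + mode_coeff \<Phi> $ 2 *s mode 2 x)" for x
    by (simp add: matrix_vector_right_distrib vector_scalar_commute mode_step)
  have "invertible (Pmat s p q aL bL)"
    using zL_distinct by (simp add: invertible_det_nz det_2 Pmat_def mat2_def)
  then have "\<Phi> 0 = Pmat s p q aL bL *v mode_coeff \<Phi>"
    by (simp add: mode_coeff_def matrix_vector_mul_assoc invertible_matrix_inv_right)
  then show "\<Phi> 0 = mode_coeff \<Phi> $ 1 *s mode 1 0 + mode_coeff \<Phi> $ 2 *s mode 2 0"
    by (simp add: vec2_eq_iff Pmat_def mode_def mult.commute)
qed

definition decaying :: "nat \<Rightarrow> bool" where
  "decaying j \<longleftrightarrow> inverse (cmod (zL j)) < 1 \<and> cmod (zR j) < 1"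

lemma decaying_iff: "decaying j \<longleftrightarrow> s * p < (-1) ^ j * s * aL \<and> (-1) ^ j * s * aR < s * p"
  unfolding decaying_def
  using cmod_zval_less_one_iff(2)[OF sign_sq p_q_unit q_nonzero coin_L_unit bL_nonzero, of j]
    cmod_zval_less_one_iff(1)[OF sign_sq p_q_unit q_nonzero coin_R_unit bR_nonzero, of j]
  by (simp only:)

lemma not_decaying_both: "\<not> (decaying 1 \<and> decaying 2)"
proof
  assume "decaying 1 \<and> decaying 2"
  then have "s * p < - (s * aL)" "- (s * aR) < s * p" "s * p < s * aL" "s * aR < s * p"
    unfolding decaying_iff by simp_all
  then show False by linarith
qed

lemma square_summable_transfer_solution_iff:
  assumes rec: "\<And>x. \<Phi> (x + 1) = A x *v \<Phi> x"
  shows "(\<lambda>x. (norm (\<Phi> x))\<^sup>2) summable_on UNIV \<longleftrightarrow>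
           (\<forall>j\<in>{1, 2::nat}. mode_coeff \<Phi> $ of_nat j = 0 \<or> decaying j)"
proof -
  define k where "k = mode_coeff \<Phi>"
  have modes: "\<Phi> x = k$1 *s mode 1 x + k$2 *s mode 2 x" for x
    unfolding k_def by (rule transfer_solution_eq_modes[OF rec])
  have left: "\<Phi> (- int n) = (k$1 * inverse (zL 1) ^ n) *s zvec (zL 1)
                               + (k$2 * inverse (zL 2) ^ n) *s zvec (zL 2)"
    and right: "\<Phi> (int n + 1) = (k$1 * zL 1 * zR 1 ^ n) *s zvec (zR 1)
                                 + (k$2 * zL 2 * zR 2 ^ n) *s zvec (zR 2)" for n
    unfolding modes by (simp_all add: mode_def mult.assoc)
  have "summable (\<lambda>n. (norm (\<Phi> (- int n)))\<^sup>2)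
          \<longleftrightarrow> (k$1 = 0 \<or> cmod (inverse (zL 1)) < 1) \<and> (k$2 = 0 \<or> cmod (inverse (zL 2)) < 1)"
    unfolding left square_summable_two_modes[OF zL_distinct] square_summable_geometric ..
  moreover have "summable (\<lambda>n. (norm (\<Phi> (int n + 1)))\<^sup>2)
          \<longleftrightarrow> (k$1 = 0 \<or> cmod (zR 1) < 1) \<and> (k$2 = 0 \<or> cmod (zR 2) < 1)"
    unfolding right square_summable_two_modes[OF zR_distinct] square_summable_geometric
    using zL_nonzero by simp
  ultimately show ?thesis
    unfolding k_def[symmetric] summable_on_int_iff_half_lines[OF zero_le_power2]
    by (auto simp: decaying_def norm_inverse)
qed

lemma Qop_eq_zero_imp_transfer:
  assumes "Qop s p q a1 a2 b \<psi> x = 0"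
  shows "(\<chi> i. if i = 1 then \<psi> (x + 1) else \<psi> x)
           = A x *v (\<chi> i. if i = 1 then \<psi> x else \<psi> (x - 1))"
proof -
  define \<alpha> where "\<alpha> = alpha s p q b (x + 1)"
  define \<gamma> where "\<gamma> = cnj (alpha (- s) p q b x)"
  define \<beta> where "\<beta> = complex_of_real (s * beta q a1 a2 x)"
  have "\<alpha> \<noteq> 0"
    unfolding \<alpha>_def alpha_def using one_plus_sign_p_pos b_nonzero
    by (simp del: of_real_add of_real_mult)
  moreover have "\<alpha> * \<psi> (x + 1) - \<gamma> * \<psi> (x - 1) + \<beta> * \<psi> x = 0"
    using assms unfolding Qop_def \<alpha>_def \<beta>_def \<gamma>_def alpha_def beta_def
    by (simp add: exp_cnj mult.assoc)
  ultimately have "\<psi> (x + 1) = - \<beta> / \<alpha> * \<psi> x + \<gamma> / \<alpha> * \<psi> (x - 1)"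
    by (simp add: field_simps)
  then show ?thesis
    unfolding vec2_eq_iff Amat_def \<alpha>_def \<beta>_def \<gamma>_def by simp
qed

lemma kerQ_subset_line: "\<exists>F. kerQ s p q a1 a2 b \<subseteq> range (\<lambda>c. cscale c F)"
proof
  define j :: nat where "j = (if decaying 1 then 1 else 2)"
  define F where "F y = mode j (y + 1) $ 2" for y
  show "kerQ s p q a1 a2 b \<subseteq> range (\<lambda>c. cscale c F)"
  proof
    fix \<psi> assume "\<psi> \<in> kerQ s p q a1 a2 b"
    then have sq_summable: "(\<lambda>x. (cmod (\<psi> x))\<^sup>2) summable_on UNIV"
      and Q_zero: "\<And>x. Qop s p q a1 a2 b \<psi> x = 0"
      unfolding kerQ_def l2Z_def by auto
    define \<Phi> :: "int \<Rightarrow> complex^2" where "\<Phi> x = (\<chi> i. if i = 1 then \<psi> x else \<psi> (x - 1))" for x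
    have rec: "\<Phi> (x + 1) = A x *v \<Phi> x" for x
      unfolding \<Phi>_def add_diff_cancel by (rule Qop_eq_zero_imp_transfer[OF Q_zero])
    have "(\<lambda>x. (cmod (\<psi> (x - 1)))\<^sup>2) summable_on UNIV"
      using summable_on_reindex_bij_betw[of "\<lambda>x::int. x - 1" UNIV UNIV "\<lambda>x. (cmod (\<psi> x))\<^sup>2"]
        sq_summable bij_diff_right[of "1::int"] by (simp add: comp_def)
    then have "(\<lambda>x. (norm (\<Phi> x))\<^sup>2) summable_on UNIV"
      unfolding \<Phi>_def norm_vec2_sq using summable_on_add[OF sq_summable] by simp
    then have "\<forall>i\<in>{1, 2::nat}. mode_coeff \<Phi> $ of_nat i = 0 \<or> decaying i"
      unfolding square_summable_transfer_solution_iff[OF rec] .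
    \<comment> \<open>at most one mode decays, so the coefficient of the other one vanishes\<close>
    then have "mode_coeff \<Phi> $ (3 - of_nat j) = 0"
      using not_decaying_both unfolding j_def by auto
    moreover have "\<psi> y = mode_coeff \<Phi> $ 1 * mode 1 (y + 1) $ 2
                          + mode_coeff \<Phi> $ 2 * mode 2 (y + 1) $ 2" for y
    proof -
      have "\<psi> y = \<Phi> (y + 1) $ 2" by (simp add: \<Phi>_def)
      then show ?thesis by (subst (asm) transfer_solution_eq_modes[OF rec]) simp
    qed
    ultimately have "\<psi> = cscale (mode_coeff \<Phi> $ of_nat j) F"
      unfolding cscale_def F_def j_def by (auto simp: fun_eq_iff)
    then show "\<psi> \<in> range (\<lambda>c. cscale c F)" by blast
  qed
qed

lemma infsum_norm_sq_less_top_iff: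
  assumes rec: "\<And>x. \<Phi> (x + 1) = A x *v \<Phi> x"
  shows "(\<Sum>\<^sub>\<infinity>x. ennreal ((norm (\<Phi> x))\<^sup>2)) < \<infinity> \<longleftrightarrow>
           (\<forall>j\<in>{1, 2::nat}.
              ennreal ((cmod ((matrix_inv (Pmat s p q aL bL) *v \<Phi> 0) $ of_nat j))\<^sup>2)
              * (\<Sum>\<^sub>\<infinity>n\<in>{1::nat..}. ennreal (inverse (cmod (zL j)) ^ (2 * n) + cmod (zR j) ^ (2 * n)))
              < \<infinity>)"
proof -
  have weighted: "ennreal ((cmod c)\<^sup>2) * X < \<infinity> \<longleftrightarrow> c = 0 \<or> X < \<infinity>" for c and X :: ennreal
    by (auto simp: ennreal_mult_less_top top.not_eq_extremum)
  have even_powers: "(\<Sum>\<^sub>\<infinity>n\<in>{1::nat..}. ennreal (inverse (cmod (zL j)) ^ (2 * n) + cmod (zR j) ^ (2 * n)))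
      < \<infinity> \<longleftrightarrow> decaying j" for j
    unfolding decaying_def by (rule infsum_ennreal_even_powers_less_top_iff) simp_all
  show ?thesis
    unfolding infsum_ennreal_less_top_iff[OF zero_le_power2]
      square_summable_transfer_solution_iff[OF rec] weighted even_powers mode_coeff_def ..
qed

end

theorem corollary4p13:
  fixes p :: real and q :: complex
    and aL aR :: real and bL bR :: complex
    and a1 a2 :: "int \<Rightarrow> real" and b :: "int \<Rightarrow> complex"
  assumes hq: "q \<noteq> 0" and hpq: "p\<^sup>2 + (cmod q)\<^sup>2 = 1"
    and hL: "aL\<^sup>2 + (cmod bL)\<^sup>2 = 1" and hR: "aR\<^sup>2 + (cmod bR)\<^sup>2 = 1"
    and hbL: "bL \<noteq> 0" and hbR: "bR \<noteq> 0"
    and coinR: "\<And>x. x \<ge> 1 \<Longrightarrow> a1 x = aR \<and> a2 x = - aR \<and> b x = bR"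
    and coinL: "\<And>x. x \<le> 0 \<Longrightarrow> a1 x = aL \<and> a2 x = - aL \<and> b x = bL"
  shows
    "(\<forall>s \<in> {1, -1::real}. \<forall>\<Phi> :: int \<Rightarrow> complex^2.
        (\<forall>x. \<Phi> (x + 1) = Amat s p q a1 a2 b x *v \<Phi> x) \<longrightarrow>
        ((\<Sum>\<^sub>\<infinity>x::int. ennreal ((norm (\<Phi> x))\<^sup>2)) < \<infinity> \<longleftrightarrow>
          (\<forall>j \<in> {1, 2::nat}.
             ennreal ((cmod ((matrix_inv (Pmat s p q aL bL) *v \<Phi> 0) $ of_nat j))\<^sup>2)
             * (\<Sum>\<^sub>\<infinity>n \<in> {1::nat..}. ennreal (inverse (cmod (zval s j p q aL bL)) ^ (2 * n)
                                              + cmod (zval s j p q aR bR) ^ (2 * n)))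
             < \<infinity>)))
     \<and> ((inverse (cmod (zval 1 1 p q aL bL)) < 1 \<and> cmod (zval 1 1 p q aR bR) < 1)
          \<longleftrightarrow> (aL < - p \<and> - p < aR))
     \<and> ((inverse (cmod (zval 1 2 p q aL bL)) < 1 \<and> cmod (zval 1 2 p q aR bR) < 1)
          \<longleftrightarrow> (aR < p \<and> p < aL))
     \<and> ((inverse (cmod (zval (-1) 1 p q aL bL)) < 1 \<and> cmod (zval (-1) 1 p q aR bR) < 1)
          \<longleftrightarrow> (aR < - p \<and> - p < aL))
     \<and> ((inverse (cmod (zval (-1) 2 p q aL bL)) < 1 \<and> cmod (zval (-1) 2 p q aR bR) < 1)
          \<longleftrightarrow> (aL < p \<and> p < aR))
     \<and> (\<forall>s \<in> {1, -1::real}. cdim_le_1 (kerQ s p q a1 a2 b))"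
proof -
  have walk: "type_III_walk p q aL aR bL bR a1 a2 b s" if "s \<in> {1, -1}" for s
    using that by unfold_locales (use assms in auto)
  interpret plus: type_III_walk p q aL aR bL bR a1 a2 b 1
    using walk by simp
  interpret minus: type_III_walk p q aL aR bL bR a1 a2 b "-1"
    using walk by simp
  have "plus.decaying 1 \<longleftrightarrow> aL < - p \<and> - p < aR" "plus.decaying 2 \<longleftrightarrow> aR < p \<and> p < aL"
    "minus.decaying 1 \<longleftrightarrow> aR < - p \<and> - p < aL" "minus.decaying 2 \<longleftrightarrow> aL < p \<and> p < aR"
    unfolding plus.decaying_iff minus.decaying_iff by auto
  moreover have "cdim_le_1 (kerQ s p q a1 a2 b)" if "s \<in> {1, -1}" for s
    using type_III_walk.kerQ_subset_line[OF walk[OF that]] by (auto intro: cdim_le_1_subset_line)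
  ultimately show ?thesis
    unfolding plus.decaying_def[symmetric] minus.decaying_def[symmetric]
    by (intro conjI ballI allI impI type_III_walk.infsum_norm_sq_less_top_iff walk) (auto intro: walk)
qed

end
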